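(* Assume the following data: (A1) an associative unital $*$-algebra $\mathcal A$ over $\mathbb C$; (A2) an $\mathcal A$-bimodule $\Omega^1$; (A3) a $\mathbb C$-linear derivation $d:\mathcal A\to\Omega^1$; (A4) a map $\omega:\Omega^1\times\overline{\Omega^1}\to\mathbb C$, linear in both slots, with $\omega(\alpha,\overline\beta)=\overline{\omega(\beta,\overline\alpha)}$, $\omega(f\alpha g,\overline\beta)=\omega(\alpha,\overline{f^*\beta g^*})$ for $f,g\in\mathcal A$, and $\omega(\alpha,\overline\alpha)>0$ for $\alpha\neq0$; (A5) a linear functional $\eta:\mathcal A\to\mathbb C$ with $\eta(f^* )=-\overline{\eta(f)}$ and $\eta([f,g])=\frac{-1}{2\sqrt{-1}}\big(\omega(df,\overline{d(g^* )})-\omega(dg,\overline{d(f^* )})\big)$ for all $f,g$. Fix $n\ge1$. Let $M:=\mathrm{Mat}(n\times n,\Omega^1)$ (the affine space of connections $\phi\mapsto d\phi+\phi A$ on the free module $\mathcal A^n$ of row vectors) and $\mathfrak k:=\{u=(u_{ij})\in\mathrm{Mat}(n\times n,\mathcal A): u_{ij}^*=-u_{ji}\ \forall i,j\}$, a real Lie algebra under the commutator. For $u\in\mathfrak k$, $A\in M$ let $du:=(du_{ij})$, $[u,A]:=uA-Au$ (matrix products using the bimodule actions), and $X_u|_A:=du+[u,A]\in M$. Define on $M$ (viewed as a real vector space) $\omega_0(B,\overline C):=\sum_{i,j}\omega(B_{ij},\overline{C_{ij}})$, $\omega^{symp}(B,C):=\operatorname{Im}\omega_0(B,\overline C)$,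 and $$H_u(A):=\eta(\operatorname{Trace}u)-\omega^{symp}(A,du)+\tfrac12\,\omega^{symp}(A,[A,u]).$$ Then $u\mapsto H_u$ is a Lie algebra homomorphism lifting the action $u\mapsto X_u$; that is, for all $u,u_1,u_2\in\mathfrak k$ and $A,B\in M$: (i) $\frac{d}{dt}\big|_{t=0}H_u(A+tB)=\omega^{symp}(X_u|_A,B)$ (so $X_u$ is the Hamiltonian vector field of $H_u$ for the constant symplectic form $\omega^{symp}$), and (ii) $\omega^{symp}(X_{u_1}|_A,X_{u_2}|_A)=H_{[u_1,u_2]}(A)$, i.e. $H_{[u_1,u_2]}=\{H_{u_1},H_{u_2}\}$ for the Poisson bracket of $\omega^{symp}$.
   Context: $\overline{\Omega^1}$ denotes the complex-conjugate vector space of $\Omega^1$ (elements $\overline\beta$, $\overline{\lambda\beta}=\bar\lambda\overline\beta$). $\operatorname{Trace}u=\sum_i u_{ii}\in\mathcal A$. *)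

theory Defs
  imports "HOL-Analysis.Analysis"
begin

text \<open>The algebra has type 'a (an associative unital ring) with complex scalar
  multiplication sc and involution st; the bimodule Omega^1 has type 'b
  (an abelian group) with complex scalar multiplication sm, left action lm and
  right action rm.  The form w a b stands for omega(a, conj b): C-linear in
  the first slot, conjugate-linear in b (i.e. linear in conj b).\<close>

locale hamiltonian_data =
  fixes sc :: "complex \<Rightarrow> 'a::ring_1 \<Rightarrow> 'a"
    and st :: "'a \<Rightarrow> 'a"
    and lm :: "'a \<Rightarrow> 'b::ab_group_add \<Rightarrow> 'b"
    and rm :: "'b \<Rightarrow> 'a \<Rightarrow> 'b"
    and sm :: "complex \<Rightarrow> 'b \<Rightarrow> 'b"
    and d :: "'a \<Rightarrow> 'b"
    and w :: "'b \<Rightarrow> 'b \<Rightarrow> complex"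
    and eta :: "'a \<Rightarrow> complex"
  assumes
    sc_add_scalar: "\<And>a b f. sc (a + b) f = sc a f + sc b f"
    and sc_add: "\<And>a f g. sc a (f + g) = sc a f + sc a g"
    and sc_assoc: "\<And>a b f. sc a (sc b f) = sc (a * b) f"
    and sc_one: "\<And>f. sc 1 f = f"
    and sc_mult_left: "\<And>a f g. sc a (f * g) = sc a f * g"
    and sc_mult_right: "\<And>a f g. sc a (f * g) = f * sc a g"
    and st_st: "\<And>f. st (st f) = f"
    and st_add: "\<And>f g. st (f + g) = st f + st g"
    and st_mult: "\<And>f g. st (f * g) = st g * st f"
    and st_sc: "\<And>a f. st (sc a f) = sc (cnj a) (st f)"
    and st_one: "st 1 = 1"
    and sm_add_scalar: "\<And>a b x. sm (a + b) x = sm a x + sm b x"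
    and sm_add: "\<And>a x y. sm a (x + y) = sm a x + sm a y"
    and sm_assoc: "\<And>a b x. sm a (sm b x) = sm (a * b) x"
    and sm_one: "\<And>x. sm 1 x = x"
    and lm_mult: "\<And>f g x. lm (f * g) x = lm f (lm g x)"
    and lm_one: "\<And>x. lm 1 x = x"
    and lm_add_left: "\<And>f g x. lm (f + g) x = lm f x + lm g x"
    and lm_add_right: "\<And>f x y. lm f (x + y) = lm f x + lm f y"
    and rm_mult: "\<And>f g x. rm x (f * g) = rm (rm x f) g"
    and rm_one: "\<And>x. rm x 1 = x"
    and rm_add_left: "\<And>x y f. rm (x + y) f = rm x f + rm y f"
    and rm_add_right: "\<And>x f g. rm x (f + g) = rm x f + rm x g"
    and lm_rm: "\<And>f x g. rm (lm f x) g = lm f (rm x g)"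
    and lm_sc: "\<And>a f x. lm (sc a f) x = sm a (lm f x)"
    and lm_sm: "\<And>a f x. lm f (sm a x) = sm a (lm f x)"
    and rm_sc: "\<And>a f x. rm x (sc a f) = sm a (rm x f)"
    and rm_sm: "\<And>a f x. rm (sm a x) f = sm a (rm x f)"
    and d_add: "\<And>f g. d (f + g) = d f + d g"
    and d_sc: "\<And>a f. d (sc a f) = sm a (d f)"
    and d_leibniz: "\<And>f g. d (f * g) = rm (d f) g + lm f (d g)"
    and w_add_left: "\<And>x y z. w (x + y) z = w x z + w y z"
    and w_sm_left: "\<And>a x z. w (sm a x) z = a * w x z"
    and w_add_right: "\<And>x y z. w x (y + z) = w x y + w x z"
    and w_sm_right: "\<And>a x y. w x (sm a y) = cnj a * w x y"
    and w_herm: "\<And>x y. w x y = cnj (w y x)"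
    and w_bimod: "\<And>f g x y. w (rm (lm f x) g) y = w x (rm (lm (st f) y) (st g))"
    and w_pos: "\<And>x. x \<noteq> 0 \<Longrightarrow> Im (w x x) = 0 \<and> Re (w x x) > 0"
    and eta_add: "\<And>f g. eta (f + g) = eta f + eta g"
    and eta_sc: "\<And>a f. eta (sc a f) = a * eta f"
    and eta_st: "\<And>f. eta (st f) = - cnj (eta f)"
    and eta_comm: "\<And>f g. eta (f * g - g * f) =
        (-1 / (2 * \<i>)) * (w (d f) (d (st g)) - w (d g) (d (st f)))"

text \<open>n x n matrices are functions on nat x nat, only entries with indices < n matter.\<close>

definition in_k :: "('a \<Rightarrow> 'a) \<Rightarrow> nat \<Rightarrow> (nat \<Rightarrow> nat \<Rightarrow> 'a::ring_1) \<Rightarrow> bool" where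
  "in_k st n u \<longleftrightarrow> (\<forall>i<n. \<forall>j<n. st (u i j) = - u j i)"

definition mat_comm :: "nat \<Rightarrow> (nat \<Rightarrow> nat \<Rightarrow> 'a::ring_1) \<Rightarrow> (nat \<Rightarrow> nat \<Rightarrow> 'a) \<Rightarrow> nat \<Rightarrow> nat \<Rightarrow> 'a" where
  "mat_comm n u v = (\<lambda>i j. (\<Sum>k<n. u i k * v k j) - (\<Sum>k<n. v i k * u k j))"

definition act_comm :: "('a \<Rightarrow> 'b \<Rightarrow> 'b) \<Rightarrow> ('b \<Rightarrow> 'a \<Rightarrow> 'b) \<Rightarrow> nat \<Rightarrow>
    (nat \<Rightarrow> nat \<Rightarrow> 'a) \<Rightarrow> (nat \<Rightarrow> nat \<Rightarrow> 'b::ab_group_add) \<Rightarrow> nat \<Rightarrow> nat \<Rightarrow> 'b" where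
  "act_comm lm rm n u A = (\<lambda>i j. (\<Sum>k<n. lm (u i k) (A k j)) - (\<Sum>k<n. rm (A i k) (u k j)))"

definition mat_d :: "('a \<Rightarrow> 'b) \<Rightarrow> (nat \<Rightarrow> nat \<Rightarrow> 'a) \<Rightarrow> nat \<Rightarrow> nat \<Rightarrow> 'b" where
  "mat_d d u = (\<lambda>i j. d (u i j))"

definition Xvec :: "('a \<Rightarrow> 'b) \<Rightarrow> ('a \<Rightarrow> 'b \<Rightarrow> 'b) \<Rightarrow> ('b \<Rightarrow> 'a \<Rightarrow> 'b) \<Rightarrow> nat \<Rightarrow>
    (nat \<Rightarrow> nat \<Rightarrow> 'a) \<Rightarrow> (nat \<Rightarrow> nat \<Rightarrow> 'b::ab_group_add) \<Rightarrow> nat \<Rightarrow> nat \<Rightarrow> 'b" where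
  "Xvec d lm rm n u A = (\<lambda>i j. mat_d d u i j + act_comm lm rm n u A i j)"

definition omega0 :: "('b \<Rightarrow> 'b \<Rightarrow> complex) \<Rightarrow> nat \<Rightarrow> (nat \<Rightarrow> nat \<Rightarrow> 'b) \<Rightarrow> (nat \<Rightarrow> nat \<Rightarrow> 'b) \<Rightarrow> complex" where
  "omega0 w n B C = (\<Sum>i<n. \<Sum>j<n. w (B i j) (C i j))"

definition omega_symp :: "('b \<Rightarrow> 'b \<Rightarrow> complex) \<Rightarrow> nat \<Rightarrow> (nat \<Rightarrow> nat \<Rightarrow> 'b) \<Rightarrow> (nat \<Rightarrow> nat \<Rightarrow> 'b) \<Rightarrow> real" where
  "omega_symp w n B C = Im (omega0 w n B C)"

definition mat_trace :: "nat \<Rightarrow> (nat \<Rightarrow> nat \<Rightarrow> 'a::comm_monoid_add) \<Rightarrow> 'a" where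
  "mat_trace n u = (\<Sum>i<n. u i i)"

text \<open>H_u(A) = eta(Tr u) - omega_symp(A, du) + 1/2 omega_symp(A, [A,u]), where [A,u] = -[u,A].\<close>
definition Ham :: "('a \<Rightarrow> 'b) \<Rightarrow> ('a \<Rightarrow> 'b \<Rightarrow> 'b) \<Rightarrow> ('b \<Rightarrow> 'a \<Rightarrow> 'b) \<Rightarrow>
    ('b \<Rightarrow> 'b \<Rightarrow> complex) \<Rightarrow> ('a \<Rightarrow> complex) \<Rightarrow> nat \<Rightarrow>
    (nat \<Rightarrow> nat \<Rightarrow> 'a::ring_1) \<Rightarrow> (nat \<Rightarrow> nat \<Rightarrow> 'b::ab_group_add) \<Rightarrow> complex" where
  "Ham d lm rm w eta n u A =
     eta (mat_trace n u)
     - complex_of_real (omega_symp w n A (mat_d d u))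
     + complex_of_real (1/2 * omega_symp w n A (\<lambda>i j. - act_comm lm rm n u A i j))"

end

theory Submission
  imports Defs "HOL-Library.Function_Algebras"
begin

(* Because u is anti-Hermitian and omega is invariant under the bimodule actions, the operator
   [u, -] is skew-adjoint for omega_0, hence for omega_symp.  Then H_u(A + tB) is a quadratic
   polynomial in t whose linear coefficient is omega_symp(du + [u,A], B), which is (i).
   For (ii), expand omega_symp(du1 + [u1,A], du2 + [u2,A]) into four terms: omega_symp(du1, du2)
   is eta(Trace [u1,u2]) by the commutator identity for eta; the two mixed terms add up to
   -omega_symp(A, d[u1,u2]) because d acts on matrices as a derivation; and the quadratic term is
   1/2 omega_symp(A, [A,[u1,u2]]) by skew-adjointness and the Jacobi identity
   [[u1,u2], -] = [u1,[u2,-]] - [u2,[u1,-]]. *)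

definition mat_lmult :: "('a \<Rightarrow> 'b \<Rightarrow> 'b) \<Rightarrow> nat \<Rightarrow> (nat \<Rightarrow> nat \<Rightarrow> 'a) \<Rightarrow>
    (nat \<Rightarrow> nat \<Rightarrow> 'b::comm_monoid_add) \<Rightarrow> nat \<Rightarrow> nat \<Rightarrow> 'b" where
  "mat_lmult lm n u X = (\<lambda>i j. \<Sum>k<n. lm (u i k) (X k j))"

definition mat_rmult :: "('b \<Rightarrow> 'a \<Rightarrow> 'b) \<Rightarrow> nat \<Rightarrow> (nat \<Rightarrow> nat \<Rightarrow> 'b::comm_monoid_add) \<Rightarrow>
    (nat \<Rightarrow> nat \<Rightarrow> 'a) \<Rightarrow> nat \<Rightarrow> nat \<Rightarrow> 'b" where
  "mat_rmult rm n X u = (\<lambda>i j. \<Sum>k<n. rm (X i k) (u k j))"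

definition mat_mult :: "nat \<Rightarrow> (nat \<Rightarrow> nat \<Rightarrow> 'a::semiring_0) \<Rightarrow> (nat \<Rightarrow> nat \<Rightarrow> 'a) \<Rightarrow>
    nat \<Rightarrow> nat \<Rightarrow> 'a" where
  "mat_mult n u v = (\<lambda>i j. \<Sum>k<n. u i k * v k j)"

definition mat_smult :: "('c \<Rightarrow> 'b \<Rightarrow> 'b) \<Rightarrow> 'c \<Rightarrow> (nat \<Rightarrow> nat \<Rightarrow> 'b) \<Rightarrow> nat \<Rightarrow> nat \<Rightarrow> 'b" where
  "mat_smult sm a X = (\<lambda>i j. sm a (X i j))"

lemma act_comm_eq: "act_comm lm rm n u A = mat_lmult lm n u A - mat_rmult rm n A u"
  by (simp add: act_comm_def mat_lmult_def mat_rmult_def fun_eq_iff)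

lemma mat_comm_eq: "mat_comm n u v = mat_mult n u v - mat_mult n v u"
  by (simp add: mat_comm_def mat_mult_def fun_eq_iff)

lemma Xvec_eq: "Xvec d lm rm n u A = mat_d d u + act_comm lm rm n u A"
  by (simp add: Xvec_def fun_eq_iff)

lemma sum_triple_reverse:
  "(\<Sum>i\<in>I. \<Sum>j\<in>J. \<Sum>k\<in>K. F i j k) = (\<Sum>k\<in>K. \<Sum>j\<in>J. \<Sum>i\<in>I. F i j k)"
proof -
  have "(\<Sum>i\<in>I. \<Sum>j\<in>J. \<Sum>k\<in>K. F i j k) = (\<Sum>i\<in>I. \<Sum>k\<in>K. \<Sum>j\<in>J. F i j k)"
    by (intro sum.cong refl sum.swap)
  also have "\<dots> = (\<Sum>k\<in>K. \<Sum>i\<in>I. \<Sum>j\<in>J. F i j k)"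
    by (rule sum.swap)
  also have "\<dots> = (\<Sum>k\<in>K. \<Sum>j\<in>J. \<Sum>i\<in>I. F i j k)"
    by (intro sum.cong refl sum.swap)
  finally show ?thesis .
qed

locale bimodule =
  fixes lm :: "'a::ring_1 \<Rightarrow> 'b::ab_group_add \<Rightarrow> 'b"
    and rm :: "'b \<Rightarrow> 'a \<Rightarrow> 'b"
  assumes lm_mult: "\<And>f g x. lm (f * g) x = lm f (lm g x)"
    and lm_add_left: "\<And>f g x. lm (f + g) x = lm f x + lm g x"
    and lm_add_right: "\<And>f x y. lm f (x + y) = lm f x + lm f y"
    and rm_mult: "\<And>f g x. rm x (f * g) = rm (rm x f) g"
    and rm_add_left: "\<And>x y f. rm (x + y) f = rm x f + rm y f"
    and rm_add_right: "\<And>x f g. rm x (f + g) = rm x f + rm x g"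
    and lm_rm: "\<And>f x g. rm (lm f x) g = lm f (rm x g)"

sublocale bimodule \<subseteq> lm_left: additive "\<lambda>f. lm f x" for x
  by unfold_locales (rule lm_add_left)
sublocale bimodule \<subseteq> lm_right: additive "lm f" for f
  by unfold_locales (rule lm_add_right)
sublocale bimodule \<subseteq> rm_left: additive "\<lambda>x. rm x f" for f
  by unfold_locales (rule rm_add_left)
sublocale bimodule \<subseteq> rm_right: additive "rm x" for x
  by unfold_locales (rule rm_add_right)

context bimodule
begin

lemmas action_distribs =
  lm_left.diff lm_left.sum lm_right.diff lm_right.sum
  rm_left.diff rm_left.sum rm_right.diff rm_right.sum

lemma mat_lmult_mat_mult:
  "mat_lmult lm n u (mat_lmult lm n v X) = mat_lmult lm n (mat_mult n u v) X"
  by (simp add: mat_lmult_def mat_mult_def fun_eq_iff action_distribs lm_mult)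
    (intro allI sum.swap)

lemma mat_rmult_mat_mult:
  "mat_rmult rm n (mat_rmult rm n X u) v = mat_rmult rm n X (mat_mult n u v)"
  by (simp add: mat_rmult_def mat_mult_def fun_eq_iff action_distribs rm_mult)
    (intro allI sum.swap)

lemma mat_lmult_rmult_commute:
  "mat_lmult lm n u (mat_rmult rm n X v) = mat_rmult rm n (mat_lmult lm n u X) v"
  by (simp add: mat_lmult_def mat_rmult_def fun_eq_iff action_distribs lm_rm)
    (intro allI sum.swap)

lemma mat_lmult_diff_left: "mat_lmult lm n (u - v) X = mat_lmult lm n u X - mat_lmult lm n v X"
  by (simp add: mat_lmult_def fun_eq_iff action_distribs sum_subtractf)

lemma mat_lmult_diff_right: "mat_lmult lm n u (X - Y) = mat_lmult lm n u X - mat_lmult lm n u Y"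
  by (simp add: mat_lmult_def fun_eq_iff action_distribs sum_subtractf)

lemma mat_rmult_diff_left: "mat_rmult rm n (X - Y) u = mat_rmult rm n X u - mat_rmult rm n Y u"
  by (simp add: mat_rmult_def fun_eq_iff action_distribs sum_subtractf)

lemma mat_rmult_diff_right: "mat_rmult rm n X (u - v) = mat_rmult rm n X u - mat_rmult rm n X v"
  by (simp add: mat_rmult_def fun_eq_iff action_distribs sum_subtractf)

lemma act_comm_add: "act_comm lm rm n u (X + Y) = act_comm lm rm n u X + act_comm lm rm n u Y"
  by (simp add: act_comm_def fun_eq_iff lm_add_right rm_add_left sum.distrib)

lemma act_comm_mat_comm:
  "act_comm lm rm n (mat_comm n u v) X =
     act_comm lm rm n u (act_comm lm rm n v X) - act_comm lm rm n v (act_comm lm rm n u X)"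
  by (simp add: act_comm_eq mat_comm_eq mat_lmult_diff_left mat_lmult_diff_right
      mat_rmult_diff_left mat_rmult_diff_right mat_lmult_mat_mult mat_rmult_mat_mult
      mat_lmult_rmult_commute algebra_simps)

end

sublocale hamiltonian_data \<subseteq> bimodule lm rm
  by unfold_locales (fact lm_mult lm_add_left lm_add_right rm_mult rm_add_left rm_add_right lm_rm)+

sublocale hamiltonian_data \<subseteq> w_left: additive "\<lambda>x. w x y" for y
  by unfold_locales (rule w_add_left)
sublocale hamiltonian_data \<subseteq> w_right: additive "w x" for x
  by unfold_locales (rule w_add_right)
sublocale hamiltonian_data \<subseteq> d_additive: additive d
  by unfold_locales (rule d_add)
sublocale hamiltonian_data \<subseteq> eta_additive: additive eta
  by unfold_locales (rule eta_add)
sublocale hamiltonian_data \<subseteq> sm_additive: additive "sm a" for a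
  by unfold_locales (rule sm_add)

context hamiltonian_data
begin

lemma act_comm_smult: "act_comm lm rm n u (mat_smult sm a X) = mat_smult sm a (act_comm lm rm n u X)"
  by (simp add: act_comm_def mat_smult_def fun_eq_iff lm_sm rm_sm sm_additive.diff sm_additive.sum)

lemma mat_d_diff: "mat_d d (u - v) = mat_d d u - mat_d d v"
  by (simp add: mat_d_def fun_eq_iff d_additive.diff)

lemma mat_d_mat_mult: "mat_d d (mat_mult n u v) = mat_rmult rm n (mat_d d u) v + mat_lmult lm n u (mat_d d v)"
  by (simp add: mat_d_def mat_mult_def mat_lmult_def mat_rmult_def fun_eq_iff d_additive.sum
      d_leibniz sum.distrib)

lemma mat_d_mat_comm:
  "mat_d d (mat_comm n u v) = act_comm lm rm n u (mat_d d v) - act_comm lm rm n v (mat_d d u)"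
  by (simp add: mat_comm_eq mat_d_diff mat_d_mat_mult act_comm_eq algebra_simps)

lemma w_lm_adjoint: "w (lm f x) y = w x (lm (st f) y)"
  using w_bimod[of f x 1 y] by (simp add: rm_one st_one)

lemma w_rm_adjoint: "w (rm x g) y = w x (rm y (st g))"
  using w_bimod[of 1 x g y] by (simp add: lm_one st_one)

lemma omega0_add_left: "omega0 w n (X + Y) Z = omega0 w n X Z + omega0 w n Y Z"
  by (simp add: omega0_def w_add_left sum.distrib)

lemma omega0_add_right: "omega0 w n Z (X + Y) = omega0 w n Z X + omega0 w n Z Y"
  by (simp add: omega0_def w_add_right sum.distrib)

lemma omega0_diff_left: "omega0 w n (X - Y) Z = omega0 w n X Z - omega0 w n Y Z"
  by (simp add: omega0_def w_left.diff sum_subtractf)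

lemma omega0_diff_right: "omega0 w n Z (X - Y) = omega0 w n Z X - omega0 w n Z Y"
  by (simp add: omega0_def w_right.diff sum_subtractf)

lemma omega0_uminus_right: "omega0 w n Z (\<lambda>i j. - X i j) = - omega0 w n Z X"
  by (simp add: omega0_def w_right.minus sum_negf)

lemma omega0_smult_left: "omega0 w n (mat_smult sm a X) Y = a * omega0 w n X Y"
  by (simp add: omega0_def mat_smult_def w_sm_left sum_distrib_left)

lemma omega0_smult_right: "omega0 w n X (mat_smult sm a Y) = cnj a * omega0 w n X Y"
  by (simp add: omega0_def mat_smult_def w_sm_right sum_distrib_left)

lemma omega0_cnj_swap: "omega0 w n X Y = cnj (omega0 w n Y X)"
  unfolding omega0_def cnj_sum by (intro sum.cong refl) (rule w_herm)

lemma omega0_mat_lmult_skew: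
  assumes "in_k st n u"
  shows "omega0 w n (mat_lmult lm n u X) Y = - omega0 w n X (mat_lmult lm n u Y)"
proof -
  have "omega0 w n (mat_lmult lm n u X) Y = (\<Sum>i<n. \<Sum>j<n. \<Sum>k<n. - w (X k j) (lm (u k i) (Y i j)))"
    unfolding omega0_def mat_lmult_def using assms
    by (intro sum.cong refl) (auto simp: w_left.sum w_lm_adjoint in_k_def lm_left.minus w_right.minus)
  also have "\<dots> = (\<Sum>k<n. \<Sum>j<n. \<Sum>i<n. - w (X k j) (lm (u k i) (Y i j)))"
    by (rule sum_triple_reverse)
  also have "\<dots> = - omega0 w n X (mat_lmult lm n u Y)"
    by (simp add: omega0_def mat_lmult_def w_right.sum sum_negf)
  finally show ?thesis .
qed

lemma omega0_mat_rmult_skew: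
  assumes "in_k st n u"
  shows "omega0 w n (mat_rmult rm n X u) Y = - omega0 w n X (mat_rmult rm n Y u)"
proof -
  have "omega0 w n (mat_rmult rm n X u) Y = (\<Sum>i<n. \<Sum>j<n. \<Sum>k<n. - w (X i k) (rm (Y i j) (u j k)))"
    unfolding omega0_def mat_rmult_def using assms
    by (intro sum.cong refl) (auto simp: w_left.sum w_rm_adjoint in_k_def rm_right.minus w_right.minus)
  also have "\<dots> = (\<Sum>i<n. \<Sum>k<n. \<Sum>j<n. - w (X i k) (rm (Y i j) (u j k)))"
    by (intro sum.cong refl sum.swap)
  also have "\<dots> = - omega0 w n X (mat_rmult rm n Y u)"
    by (simp add: omega0_def mat_rmult_def w_right.sum sum_negf)
  finally show ?thesis .
qed

lemma omega0_act_comm_skew: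
  assumes "in_k st n u"
  shows "omega0 w n (act_comm lm rm n u X) Y = - omega0 w n X (act_comm lm rm n u Y)"
  by (simp add: act_comm_eq omega0_diff_left omega0_diff_right omega0_mat_lmult_skew[OF assms]
      omega0_mat_rmult_skew[OF assms])

lemma omega_symp_add_left:
  "omega_symp w n (X + Y) Z = omega_symp w n X Z + omega_symp w n Y Z"
  by (simp add: omega_symp_def omega0_add_left)

lemma omega_symp_add_right:
  "omega_symp w n Z (X + Y) = omega_symp w n Z X + omega_symp w n Z Y"
  by (simp add: omega_symp_def omega0_add_right)

lemma omega_symp_diff_right:
  "omega_symp w n Z (X - Y) = omega_symp w n Z X - omega_symp w n Z Y"
  by (simp add: omega_symp_def omega0_diff_right)

lemma omega_symp_uminus_right: "omega_symp w n Z (\<lambda>i j. - X i j) = - omega_symp w n Z X"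
  by (simp add: omega_symp_def omega0_uminus_right)

lemma omega_symp_smult_left:
  "omega_symp w n (mat_smult sm (complex_of_real t) X) Y = t * omega_symp w n X Y"
  by (simp add: omega_symp_def omega0_smult_left)

lemma omega_symp_smult_right:
  "omega_symp w n X (mat_smult sm (complex_of_real t) Y) = t * omega_symp w n X Y"
  by (simp add: omega_symp_def omega0_smult_right)

lemma omega_symp_antisym: "omega_symp w n X Y = - omega_symp w n Y X"
  unfolding omega_symp_def by (subst omega0_cnj_swap) simp

lemma omega_symp_act_comm_skew:
  assumes "in_k st n u"
  shows "omega_symp w n X (act_comm lm rm n u Y) = - omega_symp w n (act_comm lm rm n u X) Y"
  by (simp add: omega_symp_def omega0_act_comm_skew[OF assms])

lemma eta_trace_mat_comm:
  assumes u: "in_k st n u" and v: "in_k st n v"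
  shows "eta (mat_trace n (mat_comm n u v)) = complex_of_real (omega_symp w n (mat_d d u) (mat_d d v))"
proof -
  let ?z = "omega0 w n (mat_d d u) (mat_d d v)"
  have "mat_trace n (mat_comm n u v) = (\<Sum>i<n. \<Sum>k<n. u i k * v k i - v k i * u i k)"
    by (simp add: mat_trace_def mat_comm_def sum_subtractf) (rule sum.swap)
  then have "eta (mat_trace n (mat_comm n u v)) = (\<Sum>i<n. \<Sum>k<n.
      (-1 / (2 * \<i>)) * (w (d (u i k)) (d (st (v k i))) - w (d (v k i)) (d (st (u i k)))))"
    by (simp only: eta_additive.sum eta_comm)
  also have "\<dots> = (\<Sum>i<n. \<Sum>k<n.
      (-1 / (2 * \<i>)) * (w (d (v k i)) (d (u k i)) - w (d (u i k)) (d (v i k))))"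
    using u v by (intro sum.cong refl) (auto simp: in_k_def d_additive.minus w_right.minus algebra_simps)
  also have "\<dots> = (-1 / (2 * \<i>)) * ((\<Sum>i<n. \<Sum>k<n. w (d (v k i)) (d (u k i))) - ?z)"
    by (simp only: omega0_def mat_d_def sum_subtractf[symmetric] sum_distrib_left)
  also have "(\<Sum>i<n. \<Sum>k<n. w (d (v k i)) (d (u k i))) = omega0 w n (mat_d d v) (mat_d d u)"
    by (simp add: omega0_def mat_d_def) (rule sum.swap)
  also have "\<dots> = cnj ?z"
    by (rule omega0_cnj_swap)
  also have "cnj ?z - ?z = - complex_of_real (2 * Im ?z) * \<i>"
    using complex_diff_cnj[of ?z] by (simp add: algebra_simps)
  finally show ?thesis
    by (simp add: omega_symp_def field_simps)
qed

lemma Ham_mat_comm: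
  assumes u1: "in_k st n u1" and u2: "in_k st n u2"
  shows "Ham d lm rm w eta n (mat_comm n u1 u2) A =
    complex_of_real (omega_symp w n (Xvec d lm rm n u1 A) (Xvec d lm rm n u2 A))"
proof -
  define du1 where "du1 = mat_d d u1"
  define du2 where "du2 = mat_d d u2"
  define c1 where "c1 = act_comm lm rm n u1 A"
  define c2 where "c2 = act_comm lm rm n u2 A"
  have linear_part: "omega_symp w n A (mat_d d (mat_comm n u1 u2)) =
      - omega_symp w n c1 du2 - omega_symp w n du1 c2"
  proof -
    have "omega_symp w n A (mat_d d (mat_comm n u1 u2)) =
        omega_symp w n A (act_comm lm rm n u1 du2) - omega_symp w n A (act_comm lm rm n u2 du1)"
      by (simp add: mat_d_mat_comm omega_symp_diff_right du1_def du2_def)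
    also have "\<dots> = - omega_symp w n c1 du2 + omega_symp w n c2 du1"
      by (simp add: omega_symp_act_comm_skew[OF u1] omega_symp_act_comm_skew[OF u2] c1_def c2_def)
    finally show ?thesis
      using omega_symp_antisym[of n c2 du1] by simp
  qed
  have quadratic_part:
    "omega_symp w n A (\<lambda>i j. - act_comm lm rm n (mat_comm n u1 u2) A i j) = 2 * omega_symp w n c1 c2"
  proof -
    have "omega_symp w n A (\<lambda>i j. - act_comm lm rm n (mat_comm n u1 u2) A i j) =
        - omega_symp w n A (act_comm lm rm n u1 c2) + omega_symp w n A (act_comm lm rm n u2 c1)"
      by (simp only: omega_symp_uminus_right act_comm_mat_comm omega_symp_diff_right c1_def c2_def)
    also have "\<dots> = omega_symp w n c1 c2 - omega_symp w n c2 c1"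
      by (simp add: omega_symp_act_comm_skew[OF u1] omega_symp_act_comm_skew[OF u2] c1_def c2_def)
    finally show ?thesis
      using omega_symp_antisym[of n c2 c1] by simp
  qed
  have "omega_symp w n (Xvec d lm rm n u1 A) (Xvec d lm rm n u2 A) =
      omega_symp w n du1 du2 + omega_symp w n du1 c2 + omega_symp w n c1 du2 + omega_symp w n c1 c2"
    by (simp add: Xvec_eq omega_symp_add_left omega_symp_add_right du1_def du2_def c1_def c2_def)
  then show ?thesis
    unfolding Ham_def eta_trace_mat_comm[OF u1 u2] linear_part quadratic_part du1_def du2_def
    by simp
qed

lemma Ham_has_vector_derivative:
  assumes u: "in_k st n u"
  shows "((\<lambda>t::real. Ham d lm rm w eta n u (\<lambda>i j. A i j + sm (complex_of_real t) (B i j)))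
    has_vector_derivative complex_of_real (omega_symp w n (Xvec d lm rm n u A) B)) (at 0)"
proof -
  define du where "du = mat_d d u"
  define cA where "cA = act_comm lm rm n u A"
  define cB where "cB = act_comm lm rm n u B"
  define c0 where "c0 = - omega_symp w n A du - omega_symp w n A cA / 2"
  define c1 where "c1 = - omega_symp w n B du - (omega_symp w n A cB + omega_symp w n B cA) / 2"
  define c2 where "c2 = - omega_symp w n B cB / 2"
  have line: "(\<lambda>i j. A i j + sm (complex_of_real t) (B i j)) = A + mat_smult sm (complex_of_real t) B"
    for t
    by (simp add: mat_smult_def fun_eq_iff)
  have Ham_line: "Ham d lm rm w eta n u (\<lambda>i j. A i j + sm (complex_of_real t) (B i j)) =
      eta (mat_trace n u) + complex_of_real (c0 + c1 * t + c2 * t^2)" for t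
  proof -
    have "Ham d lm rm w eta n u (\<lambda>i j. A i j + sm (complex_of_real t) (B i j)) =
        eta (mat_trace n u) - complex_of_real (omega_symp w n A du + t * omega_symp w n B du)
        + complex_of_real (1/2 * - (omega_symp w n A cA + t * omega_symp w n B cA
            + t * (omega_symp w n A cB + t * omega_symp w n B cB)))"
      unfolding Ham_def line act_comm_add act_comm_smult omega_symp_uminus_right
        omega_symp_add_left omega_symp_add_right omega_symp_smult_left omega_symp_smult_right
      by (simp only: flip: du_def cA_def cB_def)
    also have "\<dots> = eta (mat_trace n u) + complex_of_real (c0 + c1 * t + c2 * t^2)"
      by (simp add: c0_def c1_def c2_def power2_eq_square algebra_simps)
    finally show ?thesis .
  qed
  have c1_eq: "c1 = omega_symp w n (Xvec d lm rm n u A) B"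
    using omega_symp_act_comm_skew[OF u, of A B] omega_symp_antisym[of n B cA]
      omega_symp_antisym[of n B du]
    by (simp add: c1_def Xvec_eq omega_symp_add_left du_def cA_def cB_def)
  have "((\<lambda>t. c0 + c1 * t + c2 * t^2) has_real_derivative c1) (at 0)"
    by (auto intro!: derivative_eq_intros)
  then have "((\<lambda>t. eta (mat_trace n u) + complex_of_real (c0 + c1 * t + c2 * t^2))
      has_vector_derivative (0 + complex_of_real c1)) (at 0)"
    by (intro has_vector_derivative_add has_vector_derivative_const has_vector_derivative_of_real)
  then show ?thesis
    unfolding Ham_line c1_eq by simp
qed

end

theorem mainTheorem2:
  fixes sc :: "complex \<Rightarrow> 'a::ring_1 \<Rightarrow> 'a"
    and st :: "'a \<Rightarrow> 'a"
    and lm :: "'a \<Rightarrow> 'b::ab_group_add \<Rightarrow> 'b"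
    and rm :: "'b \<Rightarrow> 'a \<Rightarrow> 'b"
    and sm :: "complex \<Rightarrow> 'b \<Rightarrow> 'b"
    and d :: "'a \<Rightarrow> 'b"
    and w :: "'b \<Rightarrow> 'b \<Rightarrow> complex"
    and eta :: "'a \<Rightarrow> complex"
    and n :: nat
  assumes data: "hamiltonian_data sc st lm rm sm d w eta"
    and n: "n \<ge> 1"
  shows "(\<forall>u A B. in_k st n u \<longrightarrow>
           ((\<lambda>t::real. Ham d lm rm w eta n u (\<lambda>i j. A i j + sm (complex_of_real t) (B i j)))
              has_vector_derivative
              complex_of_real (omega_symp w n (Xvec d lm rm n u A) B)) (at 0))
       \<and> (\<forall>u1 u2 A. in_k st n u1 \<longrightarrow> in_k st n u2 \<longrightarrow>
           complex_of_real (omega_symp w n (Xvec d lm rm n u1 A) (Xvec d lm rm n u2 A))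
             = Ham d lm rm w eta n (mat_comm n u1 u2) A)"
  using hamiltonian_data.Ham_has_vector_derivative[OF data]
    hamiltonian_data.Ham_mat_comm[OF data, symmetric]
  by blast

end
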